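(* In the setup described in the context, assume the Levi-Civita connection of $\tilde g$ is locally flat ($\tilde R=0$). Let $x\in T_pM$ induce a $Q$-basis, and let $\psi=\angle(x,Q^2x)$ be the $g$-angle. Then $$r(x)=r(Qx)=r(Q^2x)=r(Q^3x)=\frac{\cos\psi}{8}(3\tau^*+\tau)+\frac18(3\tau+\tau^* ).$$
   Context: Let $M$ be a 3-dimensional smooth manifold. Fix a coordinate chart $(x^1,x^2,x^3)$ with coordinate vector fields $\partial_i$. Structures: - $g$ is a Riemannian metric with $g(\partial_1,\partial_1)=g(\partial_2,\partial_2)=A$, $g(\partial_3,\partial_3)=B$ and $g(\partial_i,\partial_j)=0$ for $i\ne j$. Here $A,B$ are smooth positive functions. - $Q$ is the $(1,1)$-tensor field with $Q\partial_1=\partial_2$, $Q\partial_2=-\partial_1$, $Q\partial_3=\partial_3$. - $P=Q^2$ and $\tilde g(x,y)=g(x,Py)$. Curvature: - $\nabla$ and $\tilde\nabla$ are the Levi-Civita connections of $g$ and $\tilde g$, with curvatures $R$ and $\tilde R$. - $R(x,y)z=\nabla_x\nabla_yz-\nabla_y\nabla_xz-\nabla_{[x,y]}z$ and $R(x,y,z,t)=g(R(x,y)z,t)$. - $\rho(y,z)=g^{ij}R(e_i,y,z,e_j)$, $\tau=g^{ij}\rho_{ij}$ and $\tau^*=\tilde g^{ij}\rho_{ij}$. - $r(x)=\rho(x,x)/g(x,x)$. Angles and $Q$-bases: - The $g$-angle is defined by $\cos\angle(u,v)=g(u,v)/\sqrt{g(u,u)g(v,v)}$. - A vector $x$ induces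 a $Q$-basis if $\{x,Qx,Q^2x\}$ is a basis of $T_pM$. *)

theory Defs
  imports "HOL-Analysis.Analysis"
begin

text \<open>Everything is expressed in the fixed coordinate chart: points of the chart domain
are vectors in real^3, coordinate indices 1,2,3 are elements of the type 3
(where the index 3 coincides with 0), tangent vectors at p are their component vectors
in the basis of coordinate vector fields, and (0,2)-tensors are 3x3 matrices.\<close>

definition pd :: "3 \<Rightarrow> (real^3 \<Rightarrow> real) \<Rightarrow> real^3 \<Rightarrow> real" where
  "pd i f p = deriv (\<lambda>t. f (p + t *\<^sub>R axis i 1)) 0"

fun ipd :: "3 list \<Rightarrow> (real^3 \<Rightarrow> real) \<Rightarrow> real^3 \<Rightarrow> real" where
  "ipd [] f = f"
| "ipd (i # is) f = pd i (ipd is f)"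

definition smooth_on3 :: "(real^3) set \<Rightarrow> (real^3 \<Rightarrow> real) \<Rightarrow> bool" where
  "smooth_on3 U f \<longleftrightarrow> (\<forall>ks p. p \<in> U \<longrightarrow> ipd ks f differentiable (at p))"

definition christ :: "(real^3 \<Rightarrow> real^3^3) \<Rightarrow> real^3 \<Rightarrow> 3 \<Rightarrow> 3 \<Rightarrow> 3 \<Rightarrow> real" where
  "christ G p k i j = (\<Sum>l\<in>UNIV. matrix_inv (G p) $ k $ l *
      (pd i (\<lambda>q. G q $ j $ l) p + pd j (\<lambda>q. G q $ i $ l) p - pd l (\<lambda>q. G q $ i $ j) p)) / 2"

text \<open>m-th component of R(d_i,d_j)d_k, with R(x,y)z = nabla_x nabla_y z - nabla_y nabla_x z - nabla_[x,y] z.\<close>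
definition curv :: "(real^3 \<Rightarrow> real^3^3) \<Rightarrow> real^3 \<Rightarrow> 3 \<Rightarrow> 3 \<Rightarrow> 3 \<Rightarrow> 3 \<Rightarrow> real" where
  "curv G p i j k m = pd i (\<lambda>q. christ G q m j k) p - pd j (\<lambda>q. christ G q m i k) p
     + (\<Sum>l\<in>UNIV. christ G p l j k * christ G p m i l - christ G p l i k * christ G p m j l)"

definition Rtensor :: "(real^3 \<Rightarrow> real^3^3) \<Rightarrow> real^3 \<Rightarrow> 3 \<Rightarrow> 3 \<Rightarrow> 3 \<Rightarrow> 3 \<Rightarrow> real" where
  "Rtensor G p i j k t = (\<Sum>m\<in>UNIV. curv G p i j k m * G p $ m $ t)"

definition ricci :: "(real^3 \<Rightarrow> real^3^3) \<Rightarrow> real^3 \<Rightarrow> 3 \<Rightarrow> 3 \<Rightarrow> real" where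
  "ricci G p y z = (\<Sum>i\<in>UNIV. \<Sum>j\<in>UNIV. matrix_inv (G p) $ i $ j * Rtensor G p i y z j)"

definition scal :: "(real^3 \<Rightarrow> real^3^3) \<Rightarrow> real^3 \<Rightarrow> real" where
  "scal G p = (\<Sum>i\<in>UNIV. \<Sum>j\<in>UNIV. matrix_inv (G p) $ i $ j * ricci G p i j)"

definition scal_star :: "(real^3 \<Rightarrow> real^3^3) \<Rightarrow> (real^3 \<Rightarrow> real^3^3) \<Rightarrow> real^3 \<Rightarrow> real" where
  "scal_star G Gt p = (\<Sum>i\<in>UNIV. \<Sum>j\<in>UNIV. matrix_inv (Gt p) $ i $ j * ricci G p i j)"

definition gval :: "(real^3 \<Rightarrow> real^3^3) \<Rightarrow> real^3 \<Rightarrow> real^3 \<Rightarrow> real^3 \<Rightarrow> real" where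
  "gval G p u v = u \<bullet> (G p *v v)"

definition rfun :: "(real^3 \<Rightarrow> real^3^3) \<Rightarrow> real^3 \<Rightarrow> real^3 \<Rightarrow> real" where
  "rfun G p x = (\<Sum>i\<in>UNIV. \<Sum>j\<in>UNIV. x $ i * x $ j * ricci G p i j) / gval G p x x"

definition g_angle :: "(real^3 \<Rightarrow> real^3^3) \<Rightarrow> real^3 \<Rightarrow> real^3 \<Rightarrow> real^3 \<Rightarrow> real" where
  "g_angle G p u v = arccos (gval G p u v / sqrt (gval G p u u * gval G p v v))"

text \<open>Matrix of Q: column j is the component vector of Q d_j.
  Q d_1 = d_2, Q d_2 = - d_1, Q d_3 = d_3.\<close>
definition Qmat :: "real^3^3" where
  "Qmat = (\<chi> k j. if j = 1 then (if k = 2 then 1 else 0)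
                  else if j = 2 then (if k = 1 then -1 else 0)
                  else (if k = 3 then 1 else 0))"

definition Pmat :: "real^3^3" where
  "Pmat = Qmat ** Qmat"

definition gmet :: "(real^3 \<Rightarrow> real) \<Rightarrow> (real^3 \<Rightarrow> real) \<Rightarrow> real^3 \<Rightarrow> real^3^3" where
  "gmet A B p = (\<chi> i j. if i = j then (if i = 3 then B p else A p) else 0)"

definition gtil :: "(real^3 \<Rightarrow> real) \<Rightarrow> (real^3 \<Rightarrow> real) \<Rightarrow> real^3 \<Rightarrow> real^3^3" where
  "gtil A B p = gmet A B p ** Pmat"

definition induces_Q_basis :: "real^3 \<Rightarrow> bool" where
  "induces_Q_basis x \<longleftrightarrow>
     (let S = {x, Qmat *v x, (Qmat ** Qmat) *v x} in independent S \<and> span S = UNIV)"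

end

theory Submission
  imports Defs
begin

text \<open>In the chart both metrics are diagonal: \<open>g = diag(A, A, B)\<close> and, since \<open>P = diag(-1, -1, 1)\<close>,
  \<open>g\<tilde> = diag(-A, -A, B)\<close>. Their Christoffel symbols and curvatures are therefore the same
  rational expressions in \<open>A\<close>, \<open>B\<close> and their first two derivatives, up to signs. Comparing these
  expressions, every off-diagonal Ricci component of \<open>g\<close>, and also \<open>\<rho>\<^sub>1\<^sub>1 - \<rho>\<^sub>2\<^sub>2\<close>, is a linear
  combination of curvature components of \<open>g\<tilde>\<close>. Hence flatness of \<open>g\<tilde>\<close> forces
  \<open>\<rho> = diag(\<rho>\<^sub>1\<^sub>1, \<rho>\<^sub>1\<^sub>1, \<rho>\<^sub>3\<^sub>3)\<close>, so \<open>r(x)\<close> only depends on \<open>x\<^sub>1\<^sup>2 + x\<^sub>2\<^sup>2\<close> and \<open>x\<^sub>3\<^sup>2\<close>, which \<open>Q\<close>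
  preserves. With \<open>\<tau> = 2\<rho>\<^sub>1\<^sub>1/A + \<rho>\<^sub>3\<^sub>3/B\<close>, \<open>\<tau>\<^sup>* = -2\<rho>\<^sub>1\<^sub>1/A + \<rho>\<^sub>3\<^sub>3/B\<close> and
  \<open>cos \<psi> = (B x\<^sub>3\<^sup>2 - A (x\<^sub>1\<^sup>2 + x\<^sub>2\<^sup>2)) / (A (x\<^sub>1\<^sup>2 + x\<^sub>2\<^sup>2) + B x\<^sub>3\<^sup>2)\<close> the formula becomes an identity
  of rational functions.\<close>

lemma has_real_derivative_pd:
  assumes "f differentiable (at p)"
  shows "((\<lambda>t. f (p + t *\<^sub>R axis i 1)) has_real_derivative pd i f p) (at 0)"
proof -
  have "(\<lambda>t::real. p + t *\<^sub>R axis i (1::real)) differentiable (at 0)"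
    by (intro derivative_intros)
  then have "(f \<circ> (\<lambda>t::real. p + t *\<^sub>R axis i (1::real))) differentiable (at 0)"
    by (rule differentiable_chain_at) (simp add: assms)
  then show ?thesis
    unfolding pd_def by (simp add: DERIV_deriv_iff_real_differentiable o_def)
qed

lemma pd_cong_open:
  assumes "open U" "p \<in> U" "\<And>q. q \<in> U \<Longrightarrow> f q = g q"
  shows "pd i f p = pd i g p"
proof -
  let ?L = "\<lambda>t::real. p + t *\<^sub>R axis i (1::real)"
  have "open (?L -` U)"
    by (rule continuous_open_vimage[OF assms(1)]) (intro continuous_intros)
  moreover have "0 \<in> ?L -` U"
    using assms(2) by simp
  ultimately have "\<forall>\<^sub>F t in nhds 0. ?L t \<in> U"
    using eventually_nhds by blast
  then have "\<forall>\<^sub>F t in nhds 0. f (?L t) = g (?L t)"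
    by (rule eventually_mono) (simp add: assms(3))
  then show ?thesis
    unfolding pd_def by (rule deriv_cong_ev) simp
qed

lemma pd_cmult:
  assumes "f differentiable (at p)"
  shows "pd i (\<lambda>q. c * f q) p = c * pd i f p"
  using DERIV_cmult[OF has_real_derivative_pd[OF assms]] unfolding pd_def
  by (rule DERIV_imp_deriv)

lemma pd_if_const: "pd i (\<lambda>q. if b then f q else 0) p = (if b then pd i f p else 0)"
  by (cases b) (simp_all add: pd_def)

lemma pd_lincomb_divide:
  assumes "F1 differentiable (at p)" "F2 differentiable (at p)" "F3 differentiable (at p)"
    and "H differentiable (at p)" "H p \<noteq> 0"
  shows "pd l (\<lambda>q. (c1 * F1 q + c2 * F2 q - c3 * F3 q) / (2 * H q)) p
    = ((c1 * pd l F1 p + c2 * pd l F2 p - c3 * pd l F3 p) * H p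
       - (c1 * F1 p + c2 * F2 p - c3 * F3 p) * pd l H p) / (2 * H p ^ 2)"
proof -
  let ?L = "\<lambda>t. p + t *\<^sub>R axis l 1"
  have "((\<lambda>t. (c1 * F1 (?L t) + c2 * F2 (?L t) - c3 * F3 (?L t)) / (2 * H (?L t)))
     has_real_derivative ((c1 * pd l F1 p + c2 * pd l F2 p - c3 * pd l F3 p) * H p
       - (c1 * F1 p + c2 * F2 p - c3 * F3 p) * pd l H p) / (2 * H p ^ 2)) (at 0)"
    using has_real_derivative_pd[OF assms(1), of l] has_real_derivative_pd[OF assms(2), of l]
      has_real_derivative_pd[OF assms(3), of l] has_real_derivative_pd[OF assms(4), of l] assms(5)
    by (auto intro!: derivative_eq_intros simp: field_simps power2_eq_square)
  then show ?thesis
    unfolding pd_def by (rule DERIV_imp_deriv)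
qed

definition diag_mat :: "('n::finite \<Rightarrow> real) \<Rightarrow> real^'n^'n" where
  "diag_mat d = (\<chi> i j. if i = j then d i else 0)"

lemma diag_mat_nth [simp]: "diag_mat d $ i $ j = (if i = j then d i else 0)"
  by (simp add: diag_mat_def)

lemma sum_delta_mult:
  fixes i :: "'n::finite"
  shows "(\<Sum>k\<in>UNIV. (if i = k then c k else 0) * f k) = (c i * f i :: real)"
proof -
  have "(\<Sum>k\<in>UNIV. (if i = k then c k else 0) * f k) = (\<Sum>k\<in>UNIV. if i = k then c k * f k else 0)"
    by (rule sum.cong) auto
  then show ?thesis
    by (simp add: sum.delta')
qed

lemma sum_mult_delta:
  fixes i :: "'n::finite"
  shows "(\<Sum>k\<in>UNIV. f k * (if k = i then c k else 0)) = (f i * c i :: real)"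
  using sum_delta_mult[of i c f] by (simp add: mult.commute eq_commute)

lemma diag_mat_mult: "diag_mat d ** diag_mat e = diag_mat (\<lambda>i. d i * e i)"
  by (simp add: vec_eq_iff matrix_matrix_mult_def sum_delta_mult)

lemma mat_1_eq_diag_mat: "mat 1 = diag_mat (\<lambda>_. 1)"
  by (simp add: vec_eq_iff mat_def)

lemma matrix_inv_eqI:
  fixes A X :: "'a::semiring_1^'n^'n"
  assumes "A ** X = mat 1" "X ** A = mat 1"
  shows "matrix_inv A = X"
proof -
  have inv: "matrix_inv A ** A = mat 1"
    unfolding matrix_inv_def by (rule conjunct2, rule someI[of _ X]) (use assms in blast)
  have "matrix_inv A = matrix_inv A ** (A ** X)"
    by (simp add: assms(1))
  also have "\<dots> = X"
    by (simp add: matrix_mul_assoc inv)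
  finally show ?thesis .
qed

lemma matrix_inv_diag_mat:
  assumes "\<And>k. d k \<noteq> 0"
  shows "matrix_inv (diag_mat d) = diag_mat (\<lambda>i. 1 / d i)"
  by (rule matrix_inv_eqI) (simp_all add: diag_mat_mult mat_1_eq_diag_mat assms)

text \<open>Christoffel symbols and curvature of a diagonal metric at a point, as functions of its
  diagonal entries \<open>h k\<close>, their derivatives \<open>dh i k = \<partial>\<^sub>i h\<^sub>k\<close> and \<open>ddh l i k = \<partial>\<^sub>l \<partial>\<^sub>i h\<^sub>k\<close>;
  \<open>diag_christ_deriv h dh ddh l\<close> is \<open>\<partial>\<^sub>l\<close> of \<open>diag_christ h dh\<close> by the quotient rule.\<close>

definition diag_christ :: "(3 \<Rightarrow> real) \<Rightarrow> (3 \<Rightarrow> 3 \<Rightarrow> real) \<Rightarrow> 3 \<Rightarrow> 3 \<Rightarrow> 3 \<Rightarrow> real" where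
  "diag_christ h dh m i j =
     (of_bool (m = j) * dh i m + of_bool (m = i) * dh j m - of_bool (i = j) * dh m i) / (2 * h m)"

definition diag_christ_deriv ::
  "(3 \<Rightarrow> real) \<Rightarrow> (3 \<Rightarrow> 3 \<Rightarrow> real) \<Rightarrow> (3 \<Rightarrow> 3 \<Rightarrow> 3 \<Rightarrow> real) \<Rightarrow> 3 \<Rightarrow> 3 \<Rightarrow> 3 \<Rightarrow> 3 \<Rightarrow> real" where
  "diag_christ_deriv h dh ddh l m i j =
     ((of_bool (m = j) * ddh l i m + of_bool (m = i) * ddh l j m - of_bool (i = j) * ddh l m i) * h m
      - (of_bool (m = j) * dh i m + of_bool (m = i) * dh j m - of_bool (i = j) * dh m i) * dh l m)
     / (2 * h m ^ 2)"

definition diag_curv ::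
  "(3 \<Rightarrow> real) \<Rightarrow> (3 \<Rightarrow> 3 \<Rightarrow> real) \<Rightarrow> (3 \<Rightarrow> 3 \<Rightarrow> 3 \<Rightarrow> real) \<Rightarrow> 3 \<Rightarrow> 3 \<Rightarrow> 3 \<Rightarrow> 3 \<Rightarrow> real" where
  "diag_curv h dh ddh i j k m =
     diag_christ_deriv h dh ddh i m j k - diag_christ_deriv h dh ddh j m i k
     + (\<Sum>l\<in>UNIV. diag_christ h dh l j k * diag_christ h dh m i l
                - diag_christ h dh l i k * diag_christ h dh m j l)"

definition diag_ricci ::
  "(3 \<Rightarrow> real) \<Rightarrow> (3 \<Rightarrow> 3 \<Rightarrow> real) \<Rightarrow> (3 \<Rightarrow> 3 \<Rightarrow> 3 \<Rightarrow> real) \<Rightarrow> 3 \<Rightarrow> 3 \<Rightarrow> real" where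
  "diag_ricci h dh ddh y z = (\<Sum>i\<in>UNIV. diag_curv h dh ddh i y z i)"

lemma christ_diag_mat:
  assumes "\<And>q. G q = diag_mat (\<lambda>k. D k q)" "\<And>k. D k q \<noteq> 0"
  shows "christ G q m i j = diag_christ (\<lambda>k. D k q) (\<lambda>i k. pd i (D k) q) m i j"
proof -
  have entry: "(\<lambda>q. G q $ a $ b) = (\<lambda>q. if a = b then D a q else 0)" for a b
    by (simp add: assms(1))
  have inv: "matrix_inv (G q) $ m $ l = (if m = l then 1 / D m q else 0)" for l
    by (simp add: assms matrix_inv_diag_mat)
  show ?thesis
    unfolding christ_def diag_christ_def entry pd_if_const inv sum_delta_mult
    by (simp add: field_simps of_bool_def)
qed

lemma curv_diag_mat:
  fixes e :: "3 \<Rightarrow> real"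
  assumes U: "open U" "p \<in> U"
    and G: "\<And>q. G q = diag_mat (\<lambda>k. e k * H k q)"
    and e: "\<And>k. e k \<noteq> 0"
    and H: "\<And>q k. q \<in> U \<Longrightarrow> H k q \<noteq> 0"
    and dH: "\<And>q k. q \<in> U \<Longrightarrow> H k differentiable (at q)"
    and ddH: "\<And>q i k. q \<in> U \<Longrightarrow> pd i (H k) differentiable (at q)"
  shows "curv G p i j k m = diag_curv (\<lambda>k. e k * H k p) (\<lambda>i k. e k * pd i (H k) p)
                              (\<lambda>l i k. e k * pd l (pd i (H k)) p) i j k m"
proof -
  have christ: "christ G q m i j = diag_christ (\<lambda>k. e k * H k q) (\<lambda>i k. e k * pd i (H k) q) m i j"
    if "q \<in> U" for q m i j
    using christ_diag_mat[OF G, where q = q] e H[OF that] pd_cmult[OF dH[OF that]] by simp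
  have "pd l (\<lambda>q. christ G q m i j) p
      = diag_christ_deriv (\<lambda>k. e k * H k p) (\<lambda>i k. e k * pd i (H k) p)
          (\<lambda>l i k. e k * pd l (pd i (H k)) p) l m i j" for l m i j
  proof -
    have "pd l (\<lambda>q. christ G q m i j) p
        = pd l (\<lambda>q. diag_christ (\<lambda>k. e k * H k q) (\<lambda>i k. e k * pd i (H k) q) m i j) p"
      using U christ by (rule pd_cong_open)
    also have "\<dots> = diag_christ_deriv (\<lambda>k. e k * H k p) (\<lambda>i k. e k * pd i (H k) p)
                      (\<lambda>l i k. e k * pd l (pd i (H k)) p) l m i j"
      unfolding diag_christ_def diag_christ_deriv_def
      using U(2) e H dH ddH
      by (subst pd_lincomb_divide) (auto intro!: derivative_intros simp: pd_cmult)
    finally show ?thesis .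
  qed
  then show ?thesis
    unfolding curv_def diag_curv_def christ[OF U(2)] by simp
qed

lemma ricci_diag_mat:
  assumes "G p = diag_mat d" "\<And>k. d k \<noteq> 0"
  shows "ricci G p y z = (\<Sum>i\<in>UNIV. curv G p i y z i)"
proof -
  have "Rtensor G p i y z j = curv G p i y z j * d j" for i j
    unfolding Rtensor_def assms(1) diag_mat_nth by (rule sum_mult_delta)
  then show ?thesis
    using assms(2) by (simp add: ricci_def assms(1) matrix_inv_diag_mat sum_delta_mult)
qed

lemma scal_diag_mat:
  assumes "G p = diag_mat d" "\<And>k. d k \<noteq> 0"
  shows "scal G p = (\<Sum>i\<in>UNIV. ricci G p i i / d i)"
  by (simp add: scal_def assms matrix_inv_diag_mat sum_delta_mult)

lemma scal_star_diag_mat: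
  assumes "Gt p = diag_mat d" "\<And>k. d k \<noteq> 0"
  shows "scal_star G Gt p = (\<Sum>i\<in>UNIV. ricci G p i i / d i)"
  by (simp add: scal_star_def assms matrix_inv_diag_mat sum_delta_mult)

definition Pdiag :: "3 \<Rightarrow> real" where
  "Pdiag k = (if k = 3 then 1 else -1)"

lemma abs_Pdiag: "\<bar>Pdiag k\<bar> = 1"
  by (simp add: Pdiag_def)

lemma Pmat_eq_diag_mat: "Pmat = diag_mat Pdiag"
  by (simp add: Pmat_def Qmat_def vec_eq_iff matrix_matrix_mult_def sum_3 Pdiag_def forall_3)

lemma diag_ricci_if_flipped_flat:
  fixes h :: "3 \<Rightarrow> real" and dh :: "3 \<Rightarrow> 3 \<Rightarrow> real" and ddh :: "3 \<Rightarrow> 3 \<Rightarrow> 3 \<Rightarrow> real"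
  assumes h: "h 2 = h 1" "\<And>l. dh l 2 = dh l 1" "\<And>l i. ddh l i 2 = ddh l i 1"
    and nz: "h 1 \<noteq> 0" "h 3 \<noteq> 0"
    and flat: "\<And>i j k m. diag_curv (\<lambda>k. Pdiag k * h k) (\<lambda>i k. Pdiag k * dh i k)
                            (\<lambda>l i k. Pdiag k * ddh l i k) i j k m = 0"
  shows "i \<noteq> j \<Longrightarrow> diag_ricci h dh ddh i j = 0"
    and "diag_ricci h dh ddh 2 2 = diag_ricci h dh ddh 1 1"
proof -
  define C where
    "C = diag_curv (\<lambda>k. Pdiag k * h k) (\<lambda>i k. Pdiag k * dh i k) (\<lambda>l i k. Pdiag k * ddh l i k)"
  let ?\<rho> = "diag_ricci h dh ddh"
  note expand = h diag_ricci_def diag_curv_def diag_christ_def diag_christ_deriv_def sum_3 Pdiag_def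
  have "?\<rho> 1 2 = - C 1 2 1 1 - C 1 3 2 3"
    using nz unfolding C_def by (simp add: expand; simp add: divide_simps)
  moreover have "?\<rho> 2 1 = C 1 2 1 1 + C 1 2 3 3 - C 1 3 2 3"
    using nz unfolding C_def by (simp add: expand; simp add: divide_simps)
  moreover have "?\<rho> 1 3 = - C 1 2 3 2 - C 1 3 3 3"
    using nz unfolding C_def by (simp add: expand; simp add: divide_simps)
  moreover have "?\<rho> 3 1 = - C 1 2 3 2 + C 1 3 1 1 + C 1 3 2 2"
    using nz unfolding C_def by (simp add: expand; simp add: divide_simps)
  moreover have "?\<rho> 2 3 = C 1 2 3 1 - C 2 3 3 3"
    using nz unfolding C_def by (simp add: expand; simp add: divide_simps)
  moreover have "?\<rho> 3 2 = - C 1 2 3 1 + C 1 3 1 2 + 3 * C 1 3 2 1"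
    using nz unfolding C_def by (simp add: expand; simp add: divide_simps)
  ultimately show "i \<noteq> j \<Longrightarrow> ?\<rho> i j = 0"
    using flat exhaust_3[of i] exhaust_3[of j] unfolding C_def[symmetric] by auto
  have "?\<rho> 1 1 - ?\<rho> 2 2 = - C 1 3 1 3 + C 2 3 2 3"
    using nz unfolding C_def by (simp add: expand; simp add: divide_simps)
  then show "?\<rho> 2 2 = ?\<rho> 1 1"
    using flat unfolding C_def[symmetric] by simp
qed

definition gmet_coeff :: "(real^3 \<Rightarrow> real) \<Rightarrow> (real^3 \<Rightarrow> real) \<Rightarrow> 3 \<Rightarrow> real^3 \<Rightarrow> real" where
  "gmet_coeff A B k q = (if k = 3 then B q else A q)"

lemma gmet_coeff_eq: "gmet_coeff A B k = (if k = 3 then B else A)"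
  by (simp add: fun_eq_iff gmet_coeff_def)

lemma gmet_eq_diag_mat: "gmet A B q = diag_mat (\<lambda>k. gmet_coeff A B k q)"
  by (simp add: gmet_def gmet_coeff_def diag_mat_def)

lemma gtil_eq_diag_mat: "gtil A B q = diag_mat (\<lambda>k. Pdiag k * gmet_coeff A B k q)"
  by (simp add: gtil_def gmet_eq_diag_mat Pmat_eq_diag_mat diag_mat_mult mult.commute)

lemma ricci_gmet_if_gtil_flat:
  assumes U: "open U" "p \<in> U"
    and smooth: "smooth_on3 U A" "smooth_on3 U B"
    and pos: "\<forall>q\<in>U. A q > 0 \<and> B q > 0"
    and flat: "\<forall>q\<in>U. \<forall>i j k m. curv (gtil A B) q i j k m = 0"
  shows "i \<noteq> j \<Longrightarrow> ricci (gmet A B) p i j = 0"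
    and "ricci (gmet A B) p 2 2 = ricci (gmet A B) p 1 1"
proof -
  let ?H = "gmet_coeff A B"
  have nz: "?H k q \<noteq> 0" if "q \<in> U" for k q
    using pos that by (auto simp: gmet_coeff_def)
  have "ipd [] f differentiable (at q)" "ipd [i] f differentiable (at q)"
    if "q \<in> U" "f \<in> {A, B}" for f i q
    using smooth that unfolding smooth_on3_def by blast+
  then have dH: "?H k differentiable (at q)" "pd i (?H k) differentiable (at q)"
    if "q \<in> U" for i k q
    using that by (simp_all add: gmet_coeff_eq)
  define h where "h = (\<lambda>k. ?H k p)"
  define dh where "dh = (\<lambda>i k. pd i (?H k) p)"
  define ddh where "ddh = (\<lambda>l i k. pd l (pd i (?H k)) p)"
  have "curv (gmet A B) p i j k m = diag_curv h dh ddh i j k m" for i j k m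
    using curv_diag_mat[OF U, of "gmet A B" "\<lambda>_. 1" ?H] nz dH
    by (simp add: gmet_eq_diag_mat h_def dh_def ddh_def)
  then have ricci: "ricci (gmet A B) p i j = diag_ricci h dh ddh i j" for i j
    using ricci_diag_mat[where G = "gmet A B" and p = p, OF gmet_eq_diag_mat nz[OF U(2)]]
    by (simp add: diag_ricci_def)
  have "curv (gtil A B) p i j k m
      = diag_curv (\<lambda>k. Pdiag k * h k) (\<lambda>i k. Pdiag k * dh i k) (\<lambda>l i k. Pdiag k * ddh l i k) i j k m"
    for i j k m
    using curv_diag_mat[OF U, of "gtil A B" Pdiag ?H] nz dH
    by (simp add: gtil_eq_diag_mat Pdiag_def h_def dh_def ddh_def)
  then have "diag_curv (\<lambda>k. Pdiag k * h k) (\<lambda>i k. Pdiag k * dh i k) (\<lambda>l i k. Pdiag k * ddh l i k) i j k m = 0"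
    for i j k m
    using flat U(2) by simp
  moreover have "h 2 = h 1" "\<And>l. dh l 2 = dh l 1" "\<And>l i. ddh l i 2 = ddh l i 1"
    and "h 1 \<noteq> 0" "h 3 \<noteq> 0"
    using nz[OF U(2), of 1] nz[OF U(2), of 3] by (simp_all add: h_def dh_def ddh_def gmet_coeff_eq)
  ultimately show "i \<noteq> j \<Longrightarrow> ricci (gmet A B) p i j = 0"
    and "ricci (gmet A B) p 2 2 = ricci (gmet A B) p 1 1"
    unfolding ricci by (blast intro: diag_ricci_if_flipped_flat)+
qed

lemma diag_mat_mult_vec_nth: "(diag_mat d *v v) $ i = d i * v $ i"
  by (simp add: matrix_vector_mult_def sum_delta_mult)

lemma gval_diag_mat:
  assumes "G p = diag_mat d"
  shows "gval G p u v = (\<Sum>i\<in>UNIV. d i * u $ i * v $ i)"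
  by (simp add: gval_def assms inner_vec_def diag_mat_mult_vec_nth mult.commute mult.left_commute)

lemma rfun_diag_mat:
  assumes "G p = diag_mat d" "\<And>i j. i \<noteq> j \<Longrightarrow> ricci G p i j = 0"
  shows "rfun G p w = (\<Sum>i\<in>UNIV. ricci G p i i * w $ i ^ 2) / (\<Sum>i\<in>UNIV. d i * w $ i ^ 2)"
  by (simp add: rfun_def gval_diag_mat[where G = G and p = p, OF assms(1)] sum_3 assms(2) power2_eq_square algebra_simps)

lemma Qmat_mult_vec_nth: "(Qmat *v w) $ 1 = - w $ 2" "(Qmat *v w) $ 2 = w $ 1" "(Qmat *v w) $ 3 = w $ 3"
  by (simp_all add: Qmat_def matrix_vector_mult_def sum_3)

lemma Pmat_mult_vec_nth: "(Pmat *v w) $ i = Pdiag i * w $ i"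
  by (simp add: Pmat_eq_diag_mat diag_mat_mult_vec_nth)

lemma rfun_Qmat:
  assumes "G p = diag_mat d" "d 2 = d 1"
    and "\<And>i j. i \<noteq> j \<Longrightarrow> ricci G p i j = 0" "ricci G p 2 2 = ricci G p 1 1"
  shows "rfun G p (Qmat *v w) = rfun G p w"
  using assms by (simp add: rfun_diag_mat[where G = G and p = p, OF assms(1,3)] sum_3 Qmat_mult_vec_nth algebra_simps)

lemma induces_Q_basis_nonzero: "induces_Q_basis x \<Longrightarrow> x \<noteq> 0"
  unfolding induces_Q_basis_def Let_def using dependent_zero by force

lemma gval_diag_mat_pos:
  assumes "G p = diag_mat d" "\<And>k. d k > 0" "x \<noteq> 0"
  shows "gval G p x x > 0"
proof -
  obtain i where "x $ i \<noteq> 0"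
    using assms(3) by (auto simp: vec_eq_iff)
  then show ?thesis
    unfolding gval_diag_mat[where G = G and p = p, OF assms(1)] mult.assoc
    using assms(2) by (intro sum_pos2[where i = i]) (simp_all add: less_le)
qed

lemma cos_g_angle_Pmat:
  assumes "G p = diag_mat d" "\<And>k. d k > 0" "x \<noteq> 0"
  shows "cos (g_angle G p x (Pmat *v x))
       = (\<Sum>i\<in>UNIV. Pdiag i * d i * x $ i ^ 2) / (\<Sum>i\<in>UNIV. d i * x $ i ^ 2)"
proof -
  let ?N = "\<Sum>i\<in>UNIV. d i * x $ i ^ 2"
  let ?M = "\<Sum>i\<in>UNIV. Pdiag i * d i * x $ i ^ 2"
  have gval: "gval G p x (Pmat *v x) = ?M" "gval G p (Pmat *v x) (Pmat *v x) = ?N" "gval G p x x = ?N"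
    unfolding gval_diag_mat[where G = G and p = p, OF assms(1)] Pmat_mult_vec_nth
    by (rule sum.cong; simp add: Pdiag_def power2_eq_square)+
  moreover have "?N > 0"
    using gval_diag_mat_pos[where G = G and p = p, OF assms] gval by simp
  moreover have "\<bar>?M\<bar> \<le> ?N"
    using sum_abs[of "\<lambda>i. Pdiag i * d i * x $ i ^ 2" UNIV] assms(2)
    by (simp add: abs_mult abs_Pdiag less_imp_le)
  ultimately show ?thesis
    unfolding g_angle_def by (simp add: cos_arccos abs_le_iff divide_simps)
qed

lemma rfun_gmet_eq_angle_formula:
  assumes pos: "A p > 0" "B p > 0" and "x \<noteq> 0"
    and offdiag: "\<And>i j. i \<noteq> j \<Longrightarrow> ricci (gmet A B) p i j = 0"
    and "ricci (gmet A B) p 2 2 = ricci (gmet A B) p 1 1"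
  shows "rfun (gmet A B) p x
       = cos (g_angle (gmet A B) p x (Pmat *v x)) / 8
           * (3 * scal_star (gmet A B) (gtil A B) p + scal (gmet A B) p)
         + (3 * scal (gmet A B) p + scal_star (gmet A B) (gtil A B) p) / 8"
proof -
  define s where "s = x $ 1 ^ 2 + x $ 2 ^ 2"
  define c where "c = x $ 3 ^ 2"
  define R11 where "R11 = ricci (gmet A B) p 1 1"
  define R33 where "R33 = ricci (gmet A B) p 3 3"
  have coeff_pos: "gmet_coeff A B k p > 0" for k
    using pos by (simp add: gmet_coeff_def)
  have N: "A p * s + B p * c > 0"
    using gval_diag_mat_pos[where G = "gmet A B" and p = p, OF gmet_eq_diag_mat coeff_pos \<open>x \<noteq> 0\<close>]
    by (simp add: gval_diag_mat[where G = "gmet A B" and p = p, OF gmet_eq_diag_mat] sum_3 gmet_coeff_def s_def c_def power2_eq_square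
        algebra_simps)
  have "rfun (gmet A B) p x = (R11 * s + R33 * c) / (A p * s + B p * c)"
    using assms(5) by (simp add: rfun_diag_mat[where G = "gmet A B" and p = p, OF gmet_eq_diag_mat offdiag] sum_3 gmet_coeff_def
        R11_def R33_def s_def c_def algebra_simps)
  moreover have "cos (g_angle (gmet A B) p x (Pmat *v x)) = (B p * c - A p * s) / (A p * s + B p * c)"
    by (simp add: cos_g_angle_Pmat[where G = "gmet A B" and p = p, OF gmet_eq_diag_mat coeff_pos \<open>x \<noteq> 0\<close>] sum_3 gmet_coeff_def
        Pdiag_def s_def c_def algebra_simps)
  moreover have "scal (gmet A B) p = 2 * R11 / A p + R33 / B p"
    using assms(5) coeff_pos
    by (simp add: scal_diag_mat[where G = "gmet A B" and p = p, OF gmet_eq_diag_mat] sum_3 gmet_coeff_def R11_def R33_def less_le)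
  moreover have "scal_star (gmet A B) (gtil A B) p = - 2 * R11 / A p + R33 / B p"
    using assms(5) coeff_pos
    by (simp add: scal_star_diag_mat[where Gt = "gtil A B" and p = p, OF gtil_eq_diag_mat] sum_3 gmet_coeff_def Pdiag_def R11_def R33_def
        less_le)
  moreover have "(R11 * s + R33 * c) / (A p * s + B p * c)
      = (B p * c - A p * s) / (A p * s + B p * c) / 8
          * (3 * (- 2 * R11 / A p + R33 / B p) + (2 * R11 / A p + R33 / B p))
        + (3 * (2 * R11 / A p + R33 / B p) + (- 2 * R11 / A p + R33 / B p)) / 8"
    using N pos by (simp add: divide_simps; algebra)
  ultimately show ?thesis
    by simp
qed

theorem proposition5p6:
  fixes A B :: "real^3 \<Rightarrow> real" and U :: "(real^3) set" and p x :: "real^3"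
  assumes "open U"
    and "smooth_on3 U A" and "smooth_on3 U B"
    and "\<forall>q\<in>U. A q > 0 \<and> B q > 0"
    and "\<forall>q\<in>U. \<forall>i j k m. curv (gtil A B) q i j k m = 0"
    and "p \<in> U"
    and "induces_Q_basis x"
  shows "rfun (gmet A B) p x = rfun (gmet A B) p (Qmat *v x)
       \<and> rfun (gmet A B) p (Qmat *v x) = rfun (gmet A B) p ((Qmat ** Qmat) *v x)
       \<and> rfun (gmet A B) p ((Qmat ** Qmat) *v x) = rfun (gmet A B) p ((Qmat ** Qmat ** Qmat) *v x)
       \<and> rfun (gmet A B) p ((Qmat ** Qmat ** Qmat) *v x)
           = cos (g_angle (gmet A B) p x ((Qmat ** Qmat) *v x)) / 8
               * (3 * scal_star (gmet A B) (gtil A B) p + scal (gmet A B) p)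
             + (3 * scal (gmet A B) p + scal_star (gmet A B) (gtil A B) p) / 8"
proof -
  have pos: "A p > 0" "B p > 0"
    using assms(4,6) by auto
  note ricci = ricci_gmet_if_gtil_flat[OF assms(1,6,2,3,4,5)]
  have Q_invariant: "rfun (gmet A B) p (Qmat *v w) = rfun (gmet A B) p w" for w
    using rfun_Qmat[where G = "gmet A B" and p = p, OF gmet_eq_diag_mat _ ricci]
    by (simp add: gmet_coeff_def)
  have "rfun (gmet A B) p x
      = cos (g_angle (gmet A B) p x ((Qmat ** Qmat) *v x)) / 8
          * (3 * scal_star (gmet A B) (gtil A B) p + scal (gmet A B) p)
        + (3 * scal (gmet A B) p + scal_star (gmet A B) (gtil A B) p) / 8"
    using rfun_gmet_eq_angle_formula[OF pos induces_Q_basis_nonzero[OF assms(7)] ricci]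
    unfolding Pmat_def .
  then show ?thesis
    using Q_invariant[of x] Q_invariant[of "Qmat *v x"] Q_invariant[of "(Qmat ** Qmat) *v x"]
    by (simp add: matrix_vector_mul_assoc matrix_mul_assoc)
qed

end
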